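(* For $x\in\mathbb X$ let $C_W(x)=1+\sum_{X\Subset\mathbb X:\,\{x\}\subsetneq X}|W(X)-1|\in[1,\infty]$ and $\overline C_W=\sup_{y\in\mathbb X}C_W(y)$. Suppose that, for all $x\in\mathbb X$, \[ |z(x)W(x)|\prod_{X\Subset\mathbb X:\,\{x\}\subsetneq X}\max\{|W(X)|,1\}\le\frac{1}{\overline C_W\,\mathrm e}, \] with the convention $1/\infty=\infty^{-1}=0$. Let $\alpha\equiv\overline C_W^{-1}\le 1$ (constant) and $r\equiv\frac{\alpha}{1+\alpha}\le\frac12$. Then, for all $x\in\mathbb X$, \[ |z(x)|\prod_{\substack{X\Subset\mathbb X:\\ x\in X}}\max\Big\{|W(X)|,\ 1+|W(X)-1|\,\alpha^{|S|}\ \Big|\ \varnothing\neq S\subset X\setminus\{x\}\Big\}\le r . \]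
   Context: $\mathbb X$ is a finite or countably infinite set; $X\Subset\mathbb X$ means $X$ is a finite subset of $\mathbb X$. Fix $z:\mathbb X\to\mathbb C$ and $W:\{X\Subset\mathbb X\}\to\mathbb C$; write $W(x)=W(\{x\})$. In the maximum, the max is over $|W(X)|$ together with all numbers $1+|W(X)-1|\alpha^{|S|}$ for nonempty $S\subset X\setminus\{x\}$ (for $X=\{x\}$ the factor is $|W(x)|$). Products of nonnegative numbers over infinite index sets are understood in $[0,\infty]$. *)

theory Defs
  imports "HOL-Analysis.Analysis"
begin

text \<open>Unconditional product of nonnegative factors in [0,\<infinity>] over an arbitrary
  index set: factors \<le> 1 contribute the infimum of their finite partial products,
  factors \<ge> 1 contribute the supremum of their finite partial products
  (with the ennreal convention 0 * \<infinity> = 0). For finite index sets this is the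
  ordinary product.\<close>
definition prod_ennreal :: "('b \<Rightarrow> ennreal) \<Rightarrow> 'b set \<Rightarrow> ennreal" where
  "prod_ennreal f A =
     (INF F\<in>{F. finite F \<and> F \<subseteq> {a\<in>A. f a < 1}}. prod f F) *
     (SUP F\<in>{F. finite F \<and> F \<subseteq> {a\<in>A. 1 \<le> f a}}. prod f F)"

definition C_W :: "('a set \<Rightarrow> complex) \<Rightarrow> 'a \<Rightarrow> ennreal" where
  "C_W W x = 1 + infsum (\<lambda>X. ennreal (cmod (W X - 1))) {X. finite X \<and> {x} \<subset> X}"

definition C_W_bar :: "('a set \<Rightarrow> complex) \<Rightarrow> ennreal" where
  "C_W_bar W = (SUP y. C_W W y)"

definition factor :: "('a set \<Rightarrow> complex) \<Rightarrow> ennreal \<Rightarrow> 'a \<Rightarrow> 'a set \<Rightarrow> ennreal" where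
  "factor W \<alpha> x X = Max ({ennreal (cmod (W X))} \<union>
      {1 + ennreal (cmod (W X - 1)) * \<alpha> ^ card S | S. S \<noteq> {} \<and> S \<subseteq> X - {x}})"

end

theory Submission
  imports Defs
begin

text \<open>Since \<open>\<alpha> \<le> 1\<close>, the factor of every \<open>X \<supset> {x}\<close> is at most
  \<open>max {|W(X)|, 1} (1 + \<alpha> |W(X) - 1|)\<close>, and the factor of \<open>{x}\<close> is \<open>|W(x)|\<close>.
  Finite products of the perturbations \<open>1 + \<alpha> |W(X) - 1|\<close> are at most
  \<open>exp (\<alpha> (C_W(x) - 1)) \<le> exp (1 - \<alpha>)\<close>, so the hypothesis bounds the left-hand side by
  \<open>(\<alpha> / e) exp (1 - \<alpha>) = \<alpha> exp (- \<alpha>) \<le> \<alpha> / (1 + \<alpha>)\<close>.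
  When the supremum of \<open>C_W\<close> is infinite, the same computation runs with \<open>\<alpha> = 0\<close>.\<close>

lemma prod_ennreal_eq_SUP:
  assumes "\<forall>a\<in>A. 1 \<le> f a"
  shows "prod_ennreal f A = (SUP F\<in>{F. finite F \<and> F \<subseteq> A}. prod f F)"
proof -
  have no_small: "{a\<in>A. f a < 1} = {}" and all_large: "{a\<in>A. 1 \<le> f a} = A"
    using assms by (auto simp: not_less[symmetric])
  show ?thesis
    unfolding prod_ennreal_def no_small all_large by simp
qed

lemma prod_le_prod_ennreal:
  assumes "\<forall>a\<in>A. 1 \<le> f a" "finite B" "B \<subseteq> A"
  shows "prod f B \<le> prod_ennreal f A"
  unfolding prod_ennreal_eq_SUP[OF assms(1)] by (rule SUP_upper) (use assms in auto)

lemma prod_ennreal_insert_le: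
  assumes "a \<notin> A" and ge_1: "\<forall>b\<in>A. 1 \<le> f b"
  shows "prod_ennreal f (insert a A) \<le> f a * prod_ennreal f A"
proof (cases "f a < 1")
  case True
  have small: "{b\<in>insert a A. f b < 1} = {a}" and large: "{b\<in>insert a A. 1 \<le> f b} = A"
    using assms True by (auto simp: not_less[symmetric])
  have "prod_ennreal f (insert a A)
      = (INF F\<in>{F. finite F \<and> F \<subseteq> {a}}. prod f F) * prod_ennreal f A"
    unfolding prod_ennreal_eq_SUP[OF ge_1] unfolding prod_ennreal_def small large by simp
  also have "\<dots> \<le> prod f {a} * prod_ennreal f A"
    by (intro mult_right_mono INF_lower) auto
  finally show ?thesis by simp
next
  case False
  then have fa: "1 \<le> f a" by simp
  have insert_ge_1: "\<forall>b\<in>insert a A. 1 \<le> f b"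
    using fa ge_1 by auto
  have "prod f F \<le> f a * prod_ennreal f A" if F: "finite F" "F \<subseteq> insert a A" for F
  proof -
    have rest: "prod f (F - {a}) \<le> prod_ennreal f A"
      by (rule prod_le_prod_ennreal[OF ge_1]) (use F in auto)
    show ?thesis
    proof (cases "a \<in> F")
      case True
      then have "prod f F = f a * prod f (F - {a})"
        using F by (simp add: prod.remove)
      then show ?thesis
        using rest by (simp add: mult_left_mono)
    next
      case False
      then have "prod f F \<le> 1 * prod_ennreal f A"
        using rest by simp
      also have "\<dots> \<le> f a * prod_ennreal f A"
        using fa by (rule mult_right_mono) simp
      finally show ?thesis .
    qed
  qed
  then show ?thesis
    unfolding prod_ennreal_eq_SUP[OF insert_ge_1] by (intro SUP_least) auto
qed

lemma prod_one_plus_le_exp_sum: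
  fixes t :: "'b \<Rightarrow> real"
  assumes "\<And>i. i \<in> F \<Longrightarrow> 0 \<le> t i"
  shows "(\<Prod>i\<in>F. 1 + t i) \<le> exp (sum t F)"
proof (cases "finite F")
  case True
  have "(\<Prod>i\<in>F. 1 + t i) \<le> (\<Prod>i\<in>F. exp (t i))"
    using assms by (intro prod_mono) (auto simp: add_nonneg_nonneg)
  then show ?thesis
    using True by (simp add: exp_sum)
qed simp

lemma prod_ennreal_le_mult_exp:
  assumes f_ge_1: "\<forall>X\<in>A. 1 \<le> f X" and g_ge_1: "\<forall>X\<in>A. 1 \<le> g X"
    and t_nonneg: "\<And>X. X \<in> A \<Longrightarrow> 0 \<le> t X"
    and f_le: "\<And>X. X \<in> A \<Longrightarrow> f X \<le> g X * ennreal (1 + t X)"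
    and sum_le: "\<And>F. finite F \<Longrightarrow> F \<subseteq> A \<Longrightarrow> sum t F \<le> s"
  shows "prod_ennreal f A \<le> prod_ennreal g A * ennreal (exp s)"
  unfolding prod_ennreal_eq_SUP[OF f_ge_1]
proof (intro SUP_least, clarify)
  fix F assume F: "finite F" "F \<subseteq> A"
  then have t_F: "\<And>X. X \<in> F \<Longrightarrow> 0 \<le> t X"
    using t_nonneg by auto
  have "prod f F \<le> (\<Prod>X\<in>F. g X * ennreal (1 + t X))"
    using F f_le by (intro prod_mono_ennreal) auto
  also have "\<dots> = prod g F * ennreal (\<Prod>X\<in>F. 1 + t X)"
    using t_F by (simp only: prod.distrib prod_ennreal add_nonneg_nonneg zero_le_one)
  also have "\<dots> \<le> prod_ennreal g A * ennreal (exp s)"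
  proof (intro mult_mono ennreal_leI)
    show "prod g F \<le> prod_ennreal g A"
      using g_ge_1 F by (rule prod_le_prod_ennreal)
    have "(\<Prod>X\<in>F. 1 + t X) \<le> exp (sum t F)"
      using t_F by (rule prod_one_plus_le_exp_sum)
    also have "\<dots> \<le> exp s"
      using sum_le[OF F] by simp
    finally show "(\<Prod>X\<in>F. 1 + t X) \<le> exp s" .
  qed auto
  finally show "prod f F \<le> prod_ennreal g A * ennreal (exp s)" .
qed

lemma C_W_le_C_W_bar: "C_W W x \<le> C_W_bar W"
  unfolding C_W_bar_def by (rule SUP_upper) simp

lemma C_W_bar_ge_1: "1 \<le> C_W_bar W"
  using C_W_le_C_W_bar[of W] by (rule order_trans[rotated]) (simp add: C_W_def)

lemma C_W_bar_pos: "0 < C_W_bar W"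
  using zero_less_one C_W_bar_ge_1 by (rule less_le_trans)

lemma inverse_C_W_bar_real:
  obtains \<alpha> where "inverse (C_W_bar W) = ennreal \<alpha>" "0 \<le> \<alpha>" "\<alpha> \<le> 1"
proof
  have le_1: "inverse (C_W_bar W) \<le> 1"
    using divide_le_posI_ennreal[of "C_W_bar W" 1 1] C_W_bar_pos[of W] C_W_bar_ge_1[of W]
    by (simp add: divide_ennreal_def)
  show "inverse (C_W_bar W) = ennreal (enn2real (inverse (C_W_bar W)))"
    using C_W_bar_pos[of W] by (simp add: ennreal_enn2real_if)
  show "enn2real (inverse (C_W_bar W)) \<le> 1"
    using le_1 by (simp add: enn2real_leI)
qed simp

lemma sum_le_C_W:
  assumes "finite F" "F \<subseteq> {X. finite X \<and> {x} \<subset> X}"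
  shows "1 + ennreal (\<Sum>X\<in>F. cmod (W X - 1)) \<le> C_W W x"
proof -
  have "ennreal (\<Sum>X\<in>F. cmod (W X - 1)) = infsum (\<lambda>X. ennreal (cmod (W X - 1))) F"
    using assms(1) by simp
  also have "\<dots> \<le> infsum (\<lambda>X. ennreal (cmod (W X - 1))) {X. finite X \<and> {x} \<subset> X}"
    by (rule infsum_mono_neutral) (use assms in \<open>auto intro: nonneg_summable_on_complete\<close>)
  finally show ?thesis
    unfolding C_W_def by (rule add_left_mono)
qed

lemma inverse_C_W_bar_mult_sum_le:
  assumes \<alpha>: "inverse (C_W_bar W) = ennreal \<alpha>" "0 \<le> \<alpha>"
    and F: "finite F" "F \<subseteq> {X. finite X \<and> {x} \<subset> X}"
  shows "\<alpha> * (\<Sum>X\<in>F. cmod (W X - 1)) \<le> 1 - \<alpha>"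
proof -
  let ?s = "\<Sum>X\<in>F. cmod (W X - 1)"
  have "ennreal (1 + ?s) \<le> C_W_bar W"
    using order_trans[OF sum_le_C_W[OF F] C_W_le_C_W_bar] by (simp add: ennreal_plus sum_nonneg)
  then have "ennreal (1 + ?s) * inverse (C_W_bar W) \<le> 1"
    using divide_le_posI_ennreal[of "C_W_bar W" "ennreal (1 + ?s)" 1] C_W_bar_pos[of W]
    by (simp add: divide_ennreal_def)
  then have "ennreal ((1 + ?s) * \<alpha>) \<le> ennreal 1"
    using \<alpha> by (simp add: ennreal_mult sum_nonneg)
  then have "(1 + ?s) * \<alpha> \<le> 1"
    by (simp add: ennreal_le_iff2)
  then show ?thesis
    by (simp add: algebra_simps)
qed

lemma factor_singleton: "factor W \<alpha> x {x} = ennreal (cmod (W {x}))"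
  unfolding factor_def by simp

lemma factor_eq_Max_image:
  "factor W \<alpha> x X = Max (insert (ennreal (cmod (W X)))
     ((\<lambda>S. 1 + ennreal (cmod (W X - 1)) * \<alpha> ^ card S) ` {S. S \<noteq> {} \<and> S \<subseteq> X - {x}}))"
  unfolding factor_def setcompr_eq_image by simp

lemma factor_ge_1:
  assumes "finite X" "{x} \<subset> X"
  shows "1 \<le> factor W \<alpha> x X"
proof -
  obtain y where "y \<in> X" "y \<noteq> x"
    using assms(2) by auto
  then have "{y} \<in> {S. S \<noteq> {} \<and> S \<subseteq> X - {x}}"
    by simp
  then have "1 + ennreal (cmod (W X - 1)) * \<alpha> ^ card {y} \<le> factor W \<alpha> x X"
    unfolding factor_eq_Max_image using assms(1)
    by (intro Max_ge insertI2 imageI) (auto intro: finite_subset[of _ "Pow X"])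
  then show ?thesis
    by (rule order_trans[rotated]) simp
qed

lemma factor_le:
  assumes "finite X" "0 \<le> \<alpha>" "\<alpha> \<le> 1"
  shows "factor W (ennreal \<alpha>) x X
    \<le> max (ennreal (cmod (W X))) 1 * ennreal (1 + \<alpha> * cmod (W X - 1))"
  unfolding factor_eq_Max_image
proof (rule Max.boundedI, goal_cases)
  case 1
  show ?case
    using assms(1) by (auto intro: finite_subset[of _ "Pow X"])
next
  case (3 b)
  let ?R = "max (ennreal (cmod (W X))) 1 * ennreal (1 + \<alpha> * cmod (W X - 1))"
  have one_le: "1 \<le> ennreal (1 + \<alpha> * cmod (W X - 1))"
    using assms by simp
  have "ennreal (cmod (W X)) \<le> ?R"
    using mult_mono[OF max.cobounded1 one_le] by simp
  moreover have "1 + ennreal (cmod (W X - 1)) * ennreal \<alpha> ^ card S \<le> ?R"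
    if "S \<noteq> {}" "S \<subseteq> X - {x}" for S
  proof -
    have "card S \<noteq> 0"
      using that assms(1) finite_subset by fastforce
    then have "\<alpha> ^ card S \<le> \<alpha>"
      using assms(2,3) power_decreasing[of 1 "card S" \<alpha>] by simp
    have "1 + ennreal (cmod (W X - 1)) * ennreal \<alpha> ^ card S
        = ennreal (1 + \<alpha> ^ card S * cmod (W X - 1))"
      using assms(2) by (simp add: ennreal_power ennreal_mult' mult_ac)
    also have "\<dots> \<le> ennreal (1 + \<alpha> * cmod (W X - 1))"
      using \<open>\<alpha> ^ card S \<le> \<alpha>\<close> by (intro ennreal_leI add_left_mono mult_right_mono) auto
    also have "\<dots> \<le> ?R"
      using mult_right_mono[of 1 "max (ennreal (cmod (W X))) 1"] by simp
    finally show ?thesis .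
  qed
  ultimately show ?case
    using 3 by auto
qed simp

lemma mult_exp_neg_le:
  fixes \<alpha> :: real
  assumes "0 \<le> \<alpha>"
  shows "\<alpha> * exp (- \<alpha>) \<le> \<alpha> / (1 + \<alpha>)"
proof -
  have "\<alpha> * exp (- \<alpha>) = \<alpha> / exp \<alpha>"
    by (simp add: exp_minus divide_inverse)
  also have "\<dots> \<le> \<alpha> / (1 + \<alpha>)"
    using assms by (intro divide_left_mono) (auto simp: add_pos_nonneg)
  finally show ?thesis .
qed

lemma inverse_mult_e_mult_exp_le:
  fixes M :: ennreal
  assumes \<alpha>: "inverse M = ennreal \<alpha>" "0 \<le> \<alpha>" and "0 < M"
  shows "inverse (M * ennreal (exp 1)) * ennreal (exp (1 - \<alpha>)) \<le> inverse M / (1 + inverse M)"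
proof -
  have "inverse (M * ennreal (exp 1)) * ennreal (exp (1 - \<alpha>)) = ennreal (\<alpha> * exp (- \<alpha>))"
    using assms
    by (simp add: ennreal_inverse_mult' inverse_ennreal ennreal_mult[symmetric] exp_diff
        exp_minus field_simps)
  also have "\<dots> \<le> ennreal (\<alpha> / (1 + \<alpha>))"
    using \<alpha>(2) by (intro ennreal_leI mult_exp_neg_le)
  also have "\<dots> = ennreal \<alpha> / ennreal (1 + \<alpha>)"
    by (rule divide_ennreal[symmetric]) (use \<alpha>(2) in auto)
  also have "\<dots> = inverse M / (1 + inverse M)"
    using \<alpha> by simp
  finally show ?thesis .
qed

lemma prod_ennreal_factor_le_singleton_mult:
  "prod_ennreal (factor W \<alpha> x) {X. finite X \<and> x \<in> X}
    \<le> ennreal (cmod (W {x})) * prod_ennreal (factor W \<alpha> x) {X. finite X \<and> {x} \<subset> X}"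
proof -
  have "{X. finite X \<and> x \<in> X} = insert {x} {X. finite X \<and> {x} \<subset> X}"
    by auto
  moreover have "\<forall>X\<in>{X. finite X \<and> {x} \<subset> X}. 1 \<le> factor W \<alpha> x X"
    by (auto intro: factor_ge_1)
  ultimately show ?thesis
    using prod_ennreal_insert_le[of "{x}" "{X. finite X \<and> {x} \<subset> X}" "factor W \<alpha> x"]
    by (simp add: factor_singleton)
qed

lemma prod_ennreal_factor_le_mult_exp:
  assumes \<alpha>: "inverse (C_W_bar W) = ennreal \<alpha>" "0 \<le> \<alpha>" "\<alpha> \<le> 1"
  shows "prod_ennreal (factor W (ennreal \<alpha>) x) {X. finite X \<and> {x} \<subset> X}
    \<le> prod_ennreal (\<lambda>X. max (ennreal (cmod (W X))) 1) {X. finite X \<and> {x} \<subset> X}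
      * ennreal (exp (1 - \<alpha>))"
proof (rule prod_ennreal_le_mult_exp[where t = "\<lambda>X. \<alpha> * cmod (W X - 1)"])
  show "\<forall>X\<in>{X. finite X \<and> {x} \<subset> X}. 1 \<le> factor W (ennreal \<alpha>) x X"
    by (auto intro: factor_ge_1)
  show "\<And>X. X \<in> {X. finite X \<and> {x} \<subset> X}
      \<Longrightarrow> factor W (ennreal \<alpha>) x X \<le> max (ennreal (cmod (W X))) 1 * ennreal (1 + \<alpha> * cmod (W X - 1))"
    using \<alpha>(2,3) by (intro factor_le) auto
  show "\<And>F. finite F \<Longrightarrow> F \<subseteq> {X. finite X \<and> {x} \<subset> X}
      \<Longrightarrow> (\<Sum>X\<in>F. \<alpha> * cmod (W X - 1)) \<le> 1 - \<alpha>"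
    unfolding sum_distrib_left[symmetric] using \<alpha>(1,2) by (rule inverse_C_W_bar_mult_sum_le)
qed (use \<alpha>(2) in auto)

theorem corollary2p2:
  fixes z :: "'a::countable \<Rightarrow> complex" and W :: "'a set \<Rightarrow> complex"
  assumes hyp: "\<And>x. ennreal (cmod (z x * W {x})) *
      prod_ennreal (\<lambda>X. max (ennreal (cmod (W X))) 1) {X. finite X \<and> {x} \<subset> X}
      \<le> inverse (C_W_bar W * ennreal (exp 1))"
  shows "\<forall>x. ennreal (cmod (z x)) *
      prod_ennreal (factor W (inverse (C_W_bar W)) x) {X. finite X \<and> x \<in> X}
      \<le> inverse (C_W_bar W) / (1 + inverse (C_W_bar W))"
proof
  fix x :: 'a
  obtain \<alpha> where \<alpha>: "inverse (C_W_bar W) = ennreal \<alpha>" "0 \<le> \<alpha>" "\<alpha> \<le> 1"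
    by (rule inverse_C_W_bar_real)
  let ?f = "factor W (ennreal \<alpha>) x" and ?B = "{X. finite X \<and> {x} \<subset> X}"
  have "ennreal (cmod (z x)) * prod_ennreal ?f {X. finite X \<and> x \<in> X}
      \<le> ennreal (cmod (z x)) * (ennreal (cmod (W {x})) * prod_ennreal ?f ?B)"
    by (intro mult_left_mono prod_ennreal_factor_le_singleton_mult) simp
  also have "\<dots> \<le> ennreal (cmod (z x * W {x}))
      * prod_ennreal (\<lambda>X. max (ennreal (cmod (W X))) 1) ?B * ennreal (exp (1 - \<alpha>))"
    using prod_ennreal_factor_le_mult_exp[OF \<alpha>, of x]
    by (simp add: mult_left_mono norm_mult ennreal_mult mult.assoc)
  also have "\<dots> \<le> inverse (C_W_bar W * ennreal (exp 1)) * ennreal (exp (1 - \<alpha>))"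
    using hyp[of x] by (rule mult_right_mono) simp
  also have "\<dots> \<le> inverse (C_W_bar W) / (1 + inverse (C_W_bar W))"
    using \<alpha>(1,2) C_W_bar_pos by (rule inverse_mult_e_mult_exp_le)
  finally show "ennreal (cmod (z x)) *
      prod_ennreal (factor W (inverse (C_W_bar W)) x) {X. finite X \<and> x \<in> X}
      \<le> inverse (C_W_bar W) / (1 + inverse (C_W_bar W))"
    unfolding \<alpha>(1) .
qed

end
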